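(* Let $\mathbf{A}$ be a countable UL-chain and let $\mathscr{K}_2$ be the class of all finite $\mathbf{A}$-structures $\langle\mathbf{A},\mathbf{M}\rangle$ in the language with a single binary relation symbol $<$ such that for all $a,b,c\in M$: $\|a<a\|^{\mathbf{A}}_{\mathbf{M}}\ge\bar 1$; $\|(a<b\wedge b<c)\to a<c\|^{\mathbf{A}}_{\mathbf{M}}\ge\bar 1$; and $\|a<b\vee b<a\|^{\mathbf{A}}_{\mathbf{M}}\ge\bar 1$. Then $\mathscr{K}_2^{\cong}$ is a Fraïssé class, i.e. a countable set of finitely generated $\mathbf{A}$-structures having the hereditary property, the joint embedding property and the amalgamation property.
   Context: A UL-algebra is $\mathbf{A}=\langle A,\wedge,\vee,\&,\to,\bar 0,\bar 1,\bot,\top\rangle$ where $\langle A,\wedge,\vee,\bot,\top\rangle$ is a bounded lattice, $\langle A,\&,\bar 1\rangle$ is a commutative monoid, $a\& b\le c$ iff $b\le a\to c$, and $((a\to b)\wedge\bar 1)\vee((b\to a)\wedge \bar 1)=\bar 1$; a UL-chain is one with linear order. An $\mathbf{A}$-structure for $\{<\}$ is a set $M$ with a function $<_{\mathbf{M}}:M^2\to A$, $\|a<b\|^{\mathbf{A}}_{\mathbf{M}}=<_{\mathbf{M}}(a,b)$, compound formulas evaluated by the operations of $\mathbf{A}$. Substructure: subset with restricted relation. Embedding: injective map preserving the values of $<$, identity on $\mathbf{A}$; isomorphism: surjective embedding. $\mathscr{K}^{\cong}$: one representative of each isomorphism type in $\mathscr{K}$. Hereditary property: closed under substructures (up to isomorphism).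 Joint embedding property: any two members embed into a common member. Amalgamation property: whenever $\mathbf{M}_0$ is a substructure of both $\mathbf{M}_1$ and $\mathbf{M}_2$, all in the class, there are a member $\mathbf{M}_3$ and embeddings $f_1:\mathbf{M}_1\to\mathbf{M}_3$, $f_2:\mathbf{M}_2\to\mathbf{M}_3$ agreeing on $M_0$. *)

theory Defs
  imports Main "HOL-Library.Countable_Set"
begin

record 'a ul_alg =
  ucar  :: "'a set"
  umeet :: "'a \<Rightarrow> 'a \<Rightarrow> 'a"
  ujoin :: "'a \<Rightarrow> 'a \<Rightarrow> 'a"
  ufus  :: "'a \<Rightarrow> 'a \<Rightarrow> 'a"
  uimp  :: "'a \<Rightarrow> 'a \<Rightarrow> 'a"
  uzero :: 'a
  uone  :: 'a
  ubot  :: 'a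
  utop  :: 'a

definition ul_le :: "('a, 'm) ul_alg_scheme \<Rightarrow> 'a \<Rightarrow> 'a \<Rightarrow> bool" where
  "ul_le A a b \<longleftrightarrow> umeet A a b = a"

definition ul_algebra :: "('a, 'm) ul_alg_scheme \<Rightarrow> bool" where
  "ul_algebra A \<longleftrightarrow>
     uzero A \<in> ucar A \<and> uone A \<in> ucar A \<and> ubot A \<in> ucar A \<and> utop A \<in> ucar A \<and>
     (\<forall>a\<in>ucar A. \<forall>b\<in>ucar A.
        umeet A a b \<in> ucar A \<and> ujoin A a b \<in> ucar A \<and>
        ufus A a b \<in> ucar A \<and> uimp A a b \<in> ucar A) \<and>
     \<comment> \<open>bounded lattice\<close>
     (\<forall>a\<in>ucar A. \<forall>b\<in>ucar A.
        umeet A a b = umeet A b a \<and> ujoin A a b = ujoin A b a \<and>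
        umeet A a (ujoin A a b) = a \<and> ujoin A a (umeet A a b) = a) \<and>
     (\<forall>a\<in>ucar A. \<forall>b\<in>ucar A. \<forall>c\<in>ucar A.
        umeet A (umeet A a b) c = umeet A a (umeet A b c) \<and>
        ujoin A (ujoin A a b) c = ujoin A a (ujoin A b c)) \<and>
     (\<forall>a\<in>ucar A. ul_le A (ubot A) a \<and> ul_le A a (utop A)) \<and>
     \<comment> \<open>commutative monoid\<close>
     (\<forall>a\<in>ucar A. \<forall>b\<in>ucar A. \<forall>c\<in>ucar A.
        ufus A (ufus A a b) c = ufus A a (ufus A b c)) \<and>
     (\<forall>a\<in>ucar A. \<forall>b\<in>ucar A. ufus A a b = ufus A b a) \<and>
     (\<forall>a\<in>ucar A. ufus A a (uone A) = a) \<and>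
     \<comment> \<open>residuation\<close>
     (\<forall>a\<in>ucar A. \<forall>b\<in>ucar A. \<forall>c\<in>ucar A.
        ul_le A (ufus A a b) c \<longleftrightarrow> ul_le A b (uimp A a c)) \<and>
     \<comment> \<open>prelinearity\<close>
     (\<forall>a\<in>ucar A. \<forall>b\<in>ucar A.
        ujoin A (umeet A (uimp A a b) (uone A)) (umeet A (uimp A b a) (uone A)) = uone A)"

definition ul_chain :: "('a, 'm) ul_alg_scheme \<Rightarrow> bool" where
  "ul_chain A \<longleftrightarrow> ul_algebra A \<and>
     (\<forall>a\<in>ucar A. \<forall>b\<in>ucar A. ul_le A a b \<or> ul_le A b a)"

text \<open>An A-structure is a pair (M, R): universe M and the interpretation R of <.
  Only the values of R on M matter.\<close>
type_synonym ('b, 'a) astr = "'b set \<times> ('b \<Rightarrow> 'b \<Rightarrow> 'a)"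

definition is_astr :: "('a, 'm) ul_alg_scheme \<Rightarrow> ('b, 'a) astr \<Rightarrow> bool" where
  "is_astr A S \<longleftrightarrow> (\<forall>x\<in>fst S. \<forall>y\<in>fst S. snd S x y \<in> ucar A)"

definition substr :: "('b, 'a) astr \<Rightarrow> ('b, 'a) astr \<Rightarrow> bool" where
  "substr N M \<longleftrightarrow> fst N \<subseteq> fst M \<and>
     (\<forall>x\<in>fst N. \<forall>y\<in>fst N. snd N x y = snd M x y)"

definition embedding :: "('b \<Rightarrow> 'c) \<Rightarrow> ('b, 'a) astr \<Rightarrow> ('c, 'a) astr \<Rightarrow> bool" where
  "embedding f N M \<longleftrightarrow> f ` fst N \<subseteq> fst M \<and> inj_on f (fst N) \<and>
     (\<forall>x\<in>fst N. \<forall>y\<in>fst N. snd M (f x) (f y) = snd N x y)"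

definition isomorphism :: "('b \<Rightarrow> 'c) \<Rightarrow> ('b, 'a) astr \<Rightarrow> ('c, 'a) astr \<Rightarrow> bool" where
  "isomorphism f N M \<longleftrightarrow> embedding f N M \<and> f ` fst N = fst M"

definition isomorphic :: "('b, 'a) astr \<Rightarrow> ('c, 'a) astr \<Rightarrow> bool" where
  "isomorphic N M \<longleftrightarrow> (\<exists>f. isomorphism f N M)"

definition K2 :: "('a, 'm) ul_alg_scheme \<Rightarrow> ('b, 'a) astr set" where
  "K2 A = {S. finite (fst S) \<and> is_astr A S \<and>
     (\<forall>a\<in>fst S. \<forall>b\<in>fst S. \<forall>c\<in>fst S.
        ul_le A (uone A) (snd S a a) \<and>
        ul_le A (uone A) (uimp A (umeet A (snd S a b) (snd S b c)) (snd S a c)) \<and>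
        ul_le A (uone A) (ujoin A (snd S a b) (snd S b a)))}"

text \<open>S is a set of representatives K^\<cong> of the class K: one member of K for each
  isomorphism type of K.\<close>
definition iso_reps :: "('b, 'a) astr set \<Rightarrow> ('b, 'a) astr set \<Rightarrow> bool" where
  "iso_reps K S \<longleftrightarrow> S \<subseteq> K \<and> (\<forall>M\<in>K. \<exists>N\<in>S. isomorphic M N) \<and>
     (\<forall>N1\<in>S. \<forall>N2\<in>S. isomorphic N1 N2 \<longrightarrow> N1 = N2)"

text \<open>Membership "in the class" up to isomorphism.\<close>
definition iso_closure :: "('b, 'a) astr set \<Rightarrow> ('b, 'a) astr set" where
  "iso_closure S = {M. \<exists>N\<in>S. isomorphic M N}"

definition hereditary :: "('b, 'a) astr set \<Rightarrow> bool" where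
  "hereditary S \<longleftrightarrow> (\<forall>M\<in>iso_closure S. \<forall>N. substr N M \<longrightarrow> N \<in> iso_closure S)"

definition jep :: "('b, 'a) astr set \<Rightarrow> bool" where
  "jep S \<longleftrightarrow> (\<forall>M1\<in>iso_closure S. \<forall>M2\<in>iso_closure S. \<exists>M3\<in>S. \<exists>f1 f2.
      embedding f1 M1 M3 \<and> embedding f2 M2 M3)"

definition amalgamation :: "('b, 'a) astr set \<Rightarrow> bool" where
  "amalgamation S \<longleftrightarrow> (\<forall>M0\<in>iso_closure S. \<forall>M1\<in>iso_closure S. \<forall>M2\<in>iso_closure S.
      substr M0 M1 \<longrightarrow> substr M0 M2 \<longrightarrow>
      (\<exists>M3\<in>S. \<exists>f1 f2. embedding f1 M1 M3 \<and> embedding f2 M2 M3 \<and>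
         (\<forall>x\<in>fst M0. f1 x = f2 x)))"

text \<open>In a finite relational language, finitely generated = finite.\<close>
definition fraisse_class :: "('b, 'a) astr set \<Rightarrow> bool" where
  "fraisse_class S \<longleftrightarrow> countable S \<and> (\<forall>M\<in>S. finite (fst M)) \<and>
     hereditary S \<and> jep S \<and> amalgamation S"

end

theory Submission
  imports Defs
begin

(* Over a UL-chain, 1 \<le> a \<rightarrow> b holds iff a \<le> b, so the axioms of K2 only speak about the
   order of the chain: the relation is reflexive and total at the level of 1 and min-transitive.
   A finite structure involves only finitely many truth values, and ranking them in the chain
   turns its relation into a nat-valued fuzzy total preorder.  Two such preorders agreeing on a
   common part are amalgamated by the max-min composition through the common part; of the two
   directions between new points the one with the larger value is lifted to at least the
   level of 1, and transitivity of the result is a case analysis on the parts the three points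
   come from.  Heredity is immediate, joint embedding is amalgamation over the empty structure,
   and countably many representatives are obtained by taking the universes {e 0, ..., e (n - 1)}
   for a fixed injection e of nat into the universe type. *)

section \<open>Fuzzy total preorders\<close>

definition fuzzy_total_preorder :: "'v::linorder \<Rightarrow> 'c set \<Rightarrow> ('c \<Rightarrow> 'c \<Rightarrow> 'v) \<Rightarrow> bool" where
  "fuzzy_total_preorder u M r \<longleftrightarrow>
     (\<forall>a\<in>M. u \<le> r a a) \<and> (\<forall>a\<in>M. \<forall>b\<in>M. u \<le> r a b \<or> u \<le> r b a) \<and>
     (\<forall>a\<in>M. \<forall>b\<in>M. \<forall>c\<in>M. min (r a b) (r b c) \<le> r a c)"

lemma fuzzy_total_preorder_refl: "fuzzy_total_preorder u M r \<Longrightarrow> a \<in> M \<Longrightarrow> u \<le> r a a"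
  unfolding fuzzy_total_preorder_def by blast

lemma fuzzy_total_preorder_total:
  "fuzzy_total_preorder u M r \<Longrightarrow> a \<in> M \<Longrightarrow> b \<in> M \<Longrightarrow> u \<le> r a b \<or> u \<le> r b a"
  unfolding fuzzy_total_preorder_def by blast

lemma fuzzy_total_preorder_trans:
  "fuzzy_total_preorder u M r \<Longrightarrow> a \<in> M \<Longrightarrow> b \<in> M \<Longrightarrow> c \<in> M \<Longrightarrow>
    min (r a b) (r b c) \<le> r a c"
  unfolding fuzzy_total_preorder_def by blast

lemma fuzzy_total_preorder_cong:
  "(\<And>x y. x \<in> M \<Longrightarrow> y \<in> M \<Longrightarrow> r x y = r' x y) \<Longrightarrow>
    fuzzy_total_preorder u M r \<longleftrightarrow> fuzzy_total_preorder u M r'"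
  unfolding fuzzy_total_preorder_def by simp

definition maxmin_through ::
    "'c set \<Rightarrow> ('c \<Rightarrow> 'c \<Rightarrow> 'v::{linorder,order_bot}) \<Rightarrow> 'c \<Rightarrow> 'c \<Rightarrow> 'v" where
  "maxmin_through Z r x y = Max (insert bot ((\<lambda>z. min (r x z) (r z y)) ` Z))"

context
  fixes Z :: "'c set" and r :: "'c \<Rightarrow> 'c \<Rightarrow> 'v::{linorder,order_bot}"
  assumes finite_Z: "finite Z"
begin

lemma maxmin_through_ge: "z \<in> Z \<Longrightarrow> min (r x z) (r z y) \<le> maxmin_through Z r x y"
  unfolding maxmin_through_def using finite_Z by simp

lemma maxmin_through_cases:
  obtains "maxmin_through Z r x y = bot"
  | z where "z \<in> Z" "maxmin_through Z r x y = min (r x z) (r z y)"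
proof -
  have "maxmin_through Z r x y \<in> insert bot ((\<lambda>z. min (r x z) (r z y)) ` Z)"
    unfolding maxmin_through_def using finite_Z by (intro Max_in) auto
  then show thesis using that by blast
qed

context
  fixes u :: 'v and M :: "'c set"
  assumes ftp: "fuzzy_total_preorder u M r" and Z_sub: "Z \<subseteq> M"
begin

lemma maxmin_through_le: "a \<in> M \<Longrightarrow> a' \<in> M \<Longrightarrow> maxmin_through Z r a a' \<le> r a a'"
  by (cases rule: maxmin_through_cases[of a a'])
    (use fuzzy_total_preorder_trans[OF ftp] Z_sub in auto)

lemma maxmin_through_trans_left:
  assumes "a \<in> M" "a' \<in> M"
  shows "min (r a a') (maxmin_through Z r a' v) \<le> maxmin_through Z r a v"
proof (cases rule: maxmin_through_cases[of a' v])
  case (2 z)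
  have "min (r a a') (r a' z) \<le> r a z"
    using fuzzy_total_preorder_trans[OF ftp] assms Z_sub \<open>z \<in> Z\<close> by blast
  moreover have "min (r a z) (r z v) \<le> maxmin_through Z r a v"
    using maxmin_through_ge \<open>z \<in> Z\<close> .
  ultimately show ?thesis using 2 by (auto simp: min_le_iff_disj intro: order.trans)
qed simp

lemma maxmin_through_trans_right:
  assumes "a \<in> M" "a' \<in> M"
  shows "min (maxmin_through Z r v a) (r a a') \<le> maxmin_through Z r v a'"
proof (cases rule: maxmin_through_cases[of v a])
  case (2 z)
  have "min (r z a) (r a a') \<le> r z a'"
    using fuzzy_total_preorder_trans[OF ftp] assms Z_sub \<open>z \<in> Z\<close> by blast
  moreover have "min (r v z) (r z a') \<le> maxmin_through Z r v a'"
    using maxmin_through_ge \<open>z \<in> Z\<close> .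
  ultimately show ?thesis using 2 by (auto simp: min_le_iff_disj intro: order.trans)
qed simp

end

context
  fixes u :: 'v and M N :: "'c set"
  assumes ftp_M: "fuzzy_total_preorder u M r" and Z_sub_M: "Z \<subseteq> M"
    and ftp_N: "fuzzy_total_preorder u N r" and Z_sub_N: "Z \<subseteq> N"
begin

lemma maxmin_through_via:
  assumes "x \<in> M" "x' \<in> M" "y \<in> N"
  shows "min (maxmin_through Z r x y) (maxmin_through Z r y x') \<le> r x x'"
proof (cases rule: maxmin_through_cases[of y x'])
  case (2 z)
  have "min (maxmin_through Z r x y) (r y z) \<le> maxmin_through Z r x z"
    using maxmin_through_trans_right[OF ftp_N Z_sub_N] assms Z_sub_N \<open>z \<in> Z\<close> by blast
  moreover have "maxmin_through Z r x z \<le> r x z"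
    using maxmin_through_le[OF ftp_M Z_sub_M] assms Z_sub_M \<open>z \<in> Z\<close> by blast
  moreover have "min (r x z) (r z x') \<le> r x x'"
    using fuzzy_total_preorder_trans[OF ftp_M] assms Z_sub_M \<open>z \<in> Z\<close> by blast
  ultimately show ?thesis using 2 by (auto simp: min_le_iff_disj intro: order.trans)
qed simp

context
  fixes x y
  assumes x: "x \<in> M" and y: "y \<in> N"
    and oriented: "maxmin_through Z r y x \<le> maxmin_through Z r x y"
begin

lemma maxmin_oriented_above:
  assumes z: "z \<in> Z"
  shows "min u (r y z) \<le> r x z"
proof -
  have "u \<le> r x z \<or> u \<le> r z x"
    using fuzzy_total_preorder_total[OF ftp_M x] z Z_sub_M by blast
  moreover have "min u (r y z) \<le> r x z" if "u \<le> r z x"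
  proof -
    have "min (r y z) (r z x) \<le> maxmin_through Z r x y"
      using maxmin_through_ge[OF z] oriented by (rule order.trans)
    then have le: "min u (r y z) \<le> maxmin_through Z r x y"
      using that by (auto simp: min_le_iff_disj intro: order.trans)
    show ?thesis
    proof (cases rule: maxmin_through_cases[of x y])
      case 1
      then show ?thesis using le by (simp add: bot_unique)
    next
      case (2 z')
      have "min (r z' y) (r y z) \<le> r z' z"
        using fuzzy_total_preorder_trans[OF ftp_N] y z \<open>z' \<in> Z\<close> Z_sub_N by blast
      moreover have "min (r x z') (r z' z) \<le> r x z"
        using fuzzy_total_preorder_trans[OF ftp_M] x z \<open>z' \<in> Z\<close> Z_sub_M by blast
      ultimately show ?thesis using le 2
        by (auto simp: min_le_iff_disj intro: order.trans)
    qed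
  qed
  ultimately show ?thesis by (auto simp: min_le_iff_disj)
qed

lemma maxmin_oriented_below:
  assumes z: "z \<in> Z"
  shows "min u (r z x) \<le> r z y"
proof -
  have "u \<le> r z y \<or> u \<le> r y z"
    using fuzzy_total_preorder_total[OF ftp_N y] z Z_sub_N by blast
  moreover have "min u (r z x) \<le> r z y" if "u \<le> r y z"
  proof -
    have "min (r y z) (r z x) \<le> maxmin_through Z r x y"
      using maxmin_through_ge[OF z] oriented by (rule order.trans)
    then have le: "min u (r z x) \<le> maxmin_through Z r x y"
      using that by (auto simp: min_le_iff_disj intro: order.trans)
    show ?thesis
    proof (cases rule: maxmin_through_cases[of x y])
      case 1
      then show ?thesis using le by (simp add: bot_unique)
    next
      case (2 z')
      have "min (r z x) (r x z') \<le> r z z'"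
        using fuzzy_total_preorder_trans[OF ftp_M] x z \<open>z' \<in> Z\<close> Z_sub_M by blast
      moreover have "min (r z z') (r z' y) \<le> r z y"
        using fuzzy_total_preorder_trans[OF ftp_N] y z \<open>z' \<in> Z\<close> Z_sub_N by blast
      ultimately show ?thesis using le 2
        by (auto simp: min_le_iff_disj intro: order.trans)
    qed
  qed
  ultimately show ?thesis by (auto simp: min_le_iff_disj)
qed

lemma maxmin_oriented_above_via:
  assumes "x' \<in> M"
  shows "min u (maxmin_through Z r y x') \<le> r x x'"
proof (cases rule: maxmin_through_cases[of y x'])
  case (2 z)
  have "min u (r y z) \<le> r x z" using maxmin_oriented_above \<open>z \<in> Z\<close> .
  moreover have "min (r x z) (r z x') \<le> r x x'"
    using fuzzy_total_preorder_trans[OF ftp_M] x assms \<open>z \<in> Z\<close> Z_sub_M by blast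
  ultimately show ?thesis using 2 by (auto simp: min_le_iff_disj intro: order.trans)
qed simp

lemma maxmin_oriented_below_via:
  assumes "y' \<in> N"
  shows "min u (maxmin_through Z r y' x) \<le> r y' y"
proof (cases rule: maxmin_through_cases[of y' x])
  case (2 z)
  have "min u (r z x) \<le> r z y" using maxmin_oriented_below \<open>z \<in> Z\<close> .
  moreover have "min (r y' z) (r z y) \<le> r y' y"
    using fuzzy_total_preorder_trans[OF ftp_N] y assms \<open>z \<in> Z\<close> Z_sub_N by blast
  ultimately show ?thesis using 2 by (auto simp: min_le_iff_disj intro: order.trans)
qed simp

end
end
end

section \<open>Amalgamation of fuzzy total preorders\<close>

(* Between a point of M1 - M2 and a point of M2 - M1 the value is the max-min composition through
   M1 \<inter> M2; the direction in which it is larger (ties go from M1 to M2) is lifted to at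
   least u, which makes the result total. *)
definition fuzzy_amalgam ::
    "'v::{linorder,order_bot} \<Rightarrow> 'c set \<Rightarrow> 'c set \<Rightarrow> ('c \<Rightarrow> 'c \<Rightarrow> 'v) \<Rightarrow> 'c \<Rightarrow> 'c \<Rightarrow> 'v" where
  "fuzzy_amalgam u M1 M2 r x y =
     (let p = maxmin_through (M1 \<inter> M2) r in
      if (x \<in> M1 \<and> y \<in> M1) \<or> (x \<in> M2 \<and> y \<in> M2) then r x y
      else if x \<in> M1 then (if p y x \<le> p x y then max (p x y) u else p x y)
      else (if p x y \<le> p y x then p x y else max (p x y) u))"

lemma fuzzy_amalgam_eq:
  "(x \<in> M1 \<and> y \<in> M1) \<or> (x \<in> M2 \<and> y \<in> M2) \<Longrightarrow> fuzzy_amalgam u M1 M2 r x y = r x y"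
  unfolding fuzzy_amalgam_def by simp

locale fuzzy_amalgamation =
  fixes u :: "'v::{linorder,order_bot}" and M1 M2 :: "'c set" and r :: "'c \<Rightarrow> 'c \<Rightarrow> 'v"
  assumes finite_common: "finite (M1 \<inter> M2)"
    and ftp1: "fuzzy_total_preorder u M1 r" and ftp2: "fuzzy_total_preorder u M2 r"
begin

abbreviation "p \<equiv> maxmin_through (M1 \<inter> M2) r"
abbreviation "T \<equiv> fuzzy_amalgam u M1 M2 r"

lemma amalgam_12: "a \<in> M1 - M2 \<Longrightarrow> b \<in> M2 - M1 \<Longrightarrow>
    T a b = (if p b a \<le> p a b then max (p a b) u else p a b)"
  unfolding fuzzy_amalgam_def by auto

lemma amalgam_21: "a \<in> M1 - M2 \<Longrightarrow> b \<in> M2 - M1 \<Longrightarrow>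
    T b a = (if p b a \<le> p a b then p b a else max (p b a) u)"
  unfolding fuzzy_amalgam_def by auto

lemmas p_ge = maxmin_through_ge[OF finite_common, where r = r]
lemmas p_le1 = maxmin_through_le[OF finite_common ftp1 Int_lower1]
  and p_le2 = maxmin_through_le[OF finite_common ftp2 Int_lower2]
lemmas p_left1 = maxmin_through_trans_left[OF finite_common ftp1 Int_lower1]
  and p_left2 = maxmin_through_trans_left[OF finite_common ftp2 Int_lower2]
lemmas p_right1 = maxmin_through_trans_right[OF finite_common ftp1 Int_lower1]
  and p_right2 = maxmin_through_trans_right[OF finite_common ftp2 Int_lower2]
lemmas p_via12 = maxmin_through_via[OF finite_common ftp1 Int_lower1 ftp2 Int_lower2]
  and p_via21 = maxmin_through_via[OF finite_common ftp2 Int_lower2 ftp1 Int_lower1]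
lemmas above12 = maxmin_oriented_above[OF finite_common ftp1 Int_lower1 ftp2 Int_lower2]
  and above21 = maxmin_oriented_above[OF finite_common ftp2 Int_lower2 ftp1 Int_lower1]
lemmas below12 = maxmin_oriented_below[OF finite_common ftp1 Int_lower1 ftp2 Int_lower2]
  and below21 = maxmin_oriented_below[OF finite_common ftp2 Int_lower2 ftp1 Int_lower1]
lemmas above_via12 = maxmin_oriented_above_via[OF finite_common ftp1 Int_lower1 ftp2 Int_lower2]
  and above_via21 = maxmin_oriented_above_via[OF finite_common ftp2 Int_lower2 ftp1 Int_lower1]
lemmas below_via12 = maxmin_oriented_below_via[OF finite_common ftp1 Int_lower1 ftp2 Int_lower2]
  and below_via21 = maxmin_oriented_below_via[OF finite_common ftp2 Int_lower2 ftp1 Int_lower1]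

(* trans_ijk is transitivity min (T x y) (T y w) \<le> T x w for x, y, w taken from the parts
   i, j, k, where 0 = M1 \<inter> M2, 1 = M1 - M2 and 2 = M2 - M1; triples inside M1 or inside M2
   are covered by the transitivity of r. *)
context
  fixes a b z
  assumes a: "a \<in> M1 - M2" and b: "b \<in> M2 - M1" and z: "z \<in> M1 \<inter> M2"
begin

lemma trans_120: "min (T a b) (r b z) \<le> r a z"
proof -
  have "min (p a b) (r b z) \<le> p a z" using p_right2 b z by blast
  moreover have "p a z \<le> r a z" using p_le1 a z by blast
  moreover have "p b a \<le> p a b \<Longrightarrow> min u (r b z) \<le> r a z" using above12 a b z by blast
  ultimately show ?thesis unfolding amalgam_12[OF a b]
    by (auto simp: min_le_iff_disj le_max_iff_disj intro: order.trans)
qed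

lemma trans_102: "min (r a z) (r z b) \<le> T a b"
  using p_ge[OF z, of a b] unfolding amalgam_12[OF a b] by (auto simp: le_max_iff_disj)

lemma trans_210: "min (T b a) (r a z) \<le> r b z"
proof -
  have "min (p b a) (r a z) \<le> p b z" using p_right1 a z by blast
  moreover have "p b z \<le> r b z" using p_le2 b z by blast
  moreover have "p a b \<le> p b a \<Longrightarrow> min u (r a z) \<le> r b z" using above21 a b z by blast
  ultimately show ?thesis unfolding amalgam_21[OF a b]
    by (auto simp: min_le_iff_disj le_max_iff_disj intro: order.trans)
qed

lemma trans_201: "min (r b z) (r z a) \<le> T b a"
  using p_ge[OF z, of b a] unfolding amalgam_21[OF a b] by (auto simp: le_max_iff_disj)

lemma trans_012: "min (r z a) (T a b) \<le> r z b"
proof -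
  have "min (r z a) (p a b) \<le> p z b" using p_left1 a z by blast
  moreover have "p z b \<le> r z b" using p_le2 b z by blast
  moreover have "p b a \<le> p a b \<Longrightarrow> min u (r z a) \<le> r z b" using below12 a b z by blast
  ultimately show ?thesis unfolding amalgam_12[OF a b]
    by (auto simp: min_le_iff_disj le_max_iff_disj intro: order.trans)
qed

lemma trans_021: "min (r z b) (T b a) \<le> r z a"
proof -
  have "min (r z b) (p b a) \<le> p z a" using p_left2 b z by blast
  moreover have "p z a \<le> r z a" using p_le1 a z by blast
  moreover have "p a b \<le> p b a \<Longrightarrow> min u (r z b) \<le> r z a" using below21 a b z by blast
  ultimately show ?thesis unfolding amalgam_21[OF a b]
    by (auto simp: min_le_iff_disj le_max_iff_disj intro: order.trans)
qed

end

context
  fixes a a' b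
  assumes a: "a \<in> M1 - M2" and a': "a' \<in> M1 - M2" and b: "b \<in> M2 - M1"
begin

lemma trans_112: "min (r a a') (T a' b) \<le> T a b"
proof -
  have "min (r a a') (p a' b) \<le> p a b" using p_left1 a a' by blast
  moreover have "min (p b a) (r a a') \<le> p b a'" using p_right1 a a' by blast
  ultimately show ?thesis unfolding amalgam_12[OF a b] amalgam_12[OF a' b]
    by (auto simp: min_le_iff_disj le_max_iff_disj intro: order.trans)
qed

lemma trans_211: "min (T b a) (r a a') \<le> T b a'"
proof -
  have "min (r a a') (p a' b) \<le> p a b" using p_left1 a a' by blast
  moreover have "min (p b a) (r a a') \<le> p b a'" using p_right1 a a' by blast
  ultimately show ?thesis unfolding amalgam_21[OF a b] amalgam_21[OF a' b]
    by (auto simp: min_le_iff_disj le_max_iff_disj intro: order.trans)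
qed

lemma trans_121: "min (T a b) (T b a') \<le> r a a'"
proof -
  have "min (p a b) (p b a') \<le> r a a'" using p_via12 a a' b by blast
  moreover have "min (r a' a) (p a b) \<le> p a' b" using p_left1 a a' by blast
  moreover have "min (p b a') (r a' a) \<le> p b a" using p_right1 a a' by blast
  moreover have "u \<le> r a a' \<or> u \<le> r a' a" using fuzzy_total_preorder_total[OF ftp1] a a' by blast
  moreover have "p b a \<le> p a b \<Longrightarrow> min u (p b a') \<le> r a a'" using above_via12 a b a' by blast
  moreover have "p a' b \<le> p b a' \<Longrightarrow> min u (p a b) \<le> r a a'" using below_via21 a b a' by blast
  ultimately show ?thesis unfolding amalgam_12[OF a b] amalgam_21[OF a' b]
    by (auto simp: min_le_iff_disj le_max_iff_disj intro: order.trans)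
qed

end

context
  fixes a b b'
  assumes a: "a \<in> M1 - M2" and b: "b \<in> M2 - M1" and b': "b' \<in> M2 - M1"
begin

lemma trans_122: "min (T a b) (r b b') \<le> T a b'"
proof -
  have "min (p a b) (r b b') \<le> p a b'" using p_right2 b b' by blast
  moreover have "min (r b b') (p b' a) \<le> p b a" using p_left2 b b' by blast
  ultimately show ?thesis unfolding amalgam_12[OF a b] amalgam_12[OF a b']
    by (auto simp: min_le_iff_disj le_max_iff_disj intro: order.trans)
qed

lemma trans_221: "min (r b b') (T b' a) \<le> T b a"
proof -
  have "min (p a b) (r b b') \<le> p a b'" using p_right2 b b' by blast
  moreover have "min (r b b') (p b' a) \<le> p b a" using p_left2 b b' by blast
  ultimately show ?thesis unfolding amalgam_21[OF a b] amalgam_21[OF a b']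
    by (auto simp: min_le_iff_disj le_max_iff_disj intro: order.trans)
qed

lemma trans_212: "min (T b a) (T a b') \<le> r b b'"
proof -
  have "min (p b a) (p a b') \<le> r b b'" using p_via21 a b b' by blast
  moreover have "min (p a b') (r b' b) \<le> p a b" using p_right2 b b' by blast
  moreover have "min (r b' b) (p b a) \<le> p b' a" using p_left2 b b' by blast
  moreover have "u \<le> r b b' \<or> u \<le> r b' b" using fuzzy_total_preorder_total[OF ftp2] b b' by blast
  moreover have "p a b \<le> p b a \<Longrightarrow> min u (p a b') \<le> r b b'" using above_via21 a b b' by blast
  moreover have "p b' a \<le> p a b' \<Longrightarrow> min u (p b a) \<le> r b b'" using below_via12 a b b' by blast
  ultimately show ?thesis unfolding amalgam_21[OF a b] amalgam_12[OF a b']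
    by (auto simp: min_le_iff_disj le_max_iff_disj intro: order.trans)
qed

end

lemma amalgam_trans:
  assumes "x \<in> M1 \<union> M2" "y \<in> M1 \<union> M2" "w \<in> M1 \<union> M2"
  shows "min (T x y) (T y w) \<le> T x w"
proof -
  have part: "v \<in> M1 - M2 \<or> v \<in> M1 \<inter> M2 \<or> v \<in> M2 - M1" if "v \<in> M1 \<union> M2" for v
    using that by blast
  from part[OF assms(1)] part[OF assms(2)] part[OF assms(3)] show ?thesis
    by (elim disjE) (simp_all add: fuzzy_amalgam_eq fuzzy_total_preorder_trans[OF ftp1]
      fuzzy_total_preorder_trans[OF ftp2] trans_120 trans_102 trans_210 trans_201 trans_012
      trans_021 trans_112 trans_211 trans_121 trans_122 trans_221 trans_212)
qed

lemma amalgam_total: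
  assumes "x \<in> M1 \<union> M2" "y \<in> M1 \<union> M2"
  shows "u \<le> T x y \<or> u \<le> T y x"
proof -
  have "u \<le> T a b \<or> u \<le> T b a" if "a \<in> M1 - M2" "b \<in> M2 - M1" for a b
    unfolding amalgam_12[OF that] amalgam_21[OF that] by auto
  then show ?thesis
    using assms fuzzy_total_preorder_total[OF ftp1] fuzzy_total_preorder_total[OF ftp2]
    by (cases "x \<in> M1"; cases "y \<in> M1"; cases "x \<in> M2"; cases "y \<in> M2")
      (auto simp: fuzzy_amalgam_eq)
qed

lemma fuzzy_total_preorder_amalgam: "fuzzy_total_preorder u (M1 \<union> M2) T"
  unfolding fuzzy_total_preorder_def
  using fuzzy_total_preorder_refl[OF ftp1] fuzzy_total_preorder_refl[OF ftp2] amalgam_total amalgam_trans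
  by (auto simp: fuzzy_amalgam_eq)

lemma amalgam_range:
  assumes "x \<in> M1 \<union> M2" "y \<in> M1 \<union> M2"
  shows "T x y \<in> insert bot (insert u {r v w | v w. (v \<in> M1 \<and> w \<in> M1) \<or> (v \<in> M2 \<and> w \<in> M2)})"
proof (cases "(x \<in> M1 \<and> y \<in> M1) \<or> (x \<in> M2 \<and> y \<in> M2)")
  case True
  then show ?thesis by (auto simp: fuzzy_amalgam_eq)
next
  case False
  have "p x y \<in> insert bot {r v w | v w. (v \<in> M1 \<and> w \<in> M1) \<or> (v \<in> M2 \<and> w \<in> M2)}"
    by (cases rule: maxmin_through_cases[OF finite_common, of r x y])
      (use assms in \<open>auto simp: min_def\<close>)
  moreover have "T x y \<in> {p x y, max (p x y) u}"
    using False unfolding fuzzy_amalgam_def Let_def by auto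
  then have "T x y \<in> {p x y, u}"
    by (auto simp: max_def)
  ultimately show ?thesis by auto
qed

end

section \<open>Ranking the truth values of a UL-chain\<close>

lemma ul_le_refl:
  assumes "ul_algebra A" "a \<in> ucar A"
  shows "ul_le A a a"
proof -
  have "ujoin A a (umeet A a a) = a" "umeet A a (ujoin A a (umeet A a a)) = a"
    using assms unfolding ul_algebra_def by blast+
  then show ?thesis unfolding ul_le_def by simp
qed

lemma ul_le_antisym:
  "ul_algebra A \<Longrightarrow> a \<in> ucar A \<Longrightarrow> b \<in> ucar A \<Longrightarrow> ul_le A a b \<Longrightarrow> ul_le A b a \<Longrightarrow> a = b"
  unfolding ul_algebra_def ul_le_def by metis

lemma ul_le_trans:
  "ul_algebra A \<Longrightarrow> a \<in> ucar A \<Longrightarrow> b \<in> ucar A \<Longrightarrow> c \<in> ucar A \<Longrightarrow>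
    ul_le A a b \<Longrightarrow> ul_le A b c \<Longrightarrow> ul_le A a c"
  unfolding ul_algebra_def ul_le_def by metis

lemma ul_le_total: "ul_chain A \<Longrightarrow> a \<in> ucar A \<Longrightarrow> b \<in> ucar A \<Longrightarrow> ul_le A a b \<or> ul_le A b a"
  unfolding ul_chain_def by blast

lemma ul_bot_le: "ul_algebra A \<Longrightarrow> a \<in> ucar A \<Longrightarrow> ul_le A (ubot A) a"
  unfolding ul_algebra_def by blast

lemma ul_join_eq_right:
  assumes "ul_algebra A" "a \<in> ucar A" "b \<in> ucar A" "ul_le A a b"
  shows "ujoin A a b = b"
proof -
  have "ujoin A b (umeet A b a) = b" "umeet A b a = umeet A a b" "ujoin A b a = ujoin A a b"
    using assms(1-3) unfolding ul_algebra_def by blast+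
  then show ?thesis using assms(4) unfolding ul_le_def by simp
qed

lemma ul_one_le_imp_iff:
  assumes "ul_algebra A" "a \<in> ucar A" "b \<in> ucar A"
  shows "ul_le A (uone A) (uimp A a b) \<longleftrightarrow> ul_le A a b"
proof -
  have "ul_le A (ufus A a (uone A)) b \<longleftrightarrow> ul_le A (uone A) (uimp A a b)"
    and "ufus A a (uone A) = a"
    using assms unfolding ul_algebra_def by blast+
  then show ?thesis by simp
qed

context
  fixes A :: "('a, 'm) ul_alg_scheme"
  assumes chain: "ul_chain A"
begin

lemma ul_chain_algebra: "ul_algebra A"
  using chain unfolding ul_chain_def by blast

lemma ul_chain_meet: "a \<in> ucar A \<Longrightarrow> b \<in> ucar A \<Longrightarrow> umeet A a b = (if ul_le A a b then a else b)"
  using ul_le_total[OF chain, of a b] ul_chain_algebra unfolding ul_algebra_def ul_le_def by auto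

lemma ul_chain_join: "a \<in> ucar A \<Longrightarrow> b \<in> ucar A \<Longrightarrow> ujoin A a b = (if ul_le A a b then b else a)"
  using ul_le_total[OF chain, of a b] ul_join_eq_right[OF ul_chain_algebra] ul_chain_algebra
  unfolding ul_algebra_def by metis

end

definition ul_rank :: "('a, 'm) ul_alg_scheme \<Rightarrow> 'a set \<Rightarrow> 'a \<Rightarrow> nat" where
  "ul_rank A V v = card {w \<in> V. ul_le A w v \<and> w \<noteq> v}"

context
  fixes A :: "('a, 'm) ul_alg_scheme" and V :: "'a set"
  assumes chain: "ul_chain A" and finite_V: "finite V" and V_sub: "V \<subseteq> ucar A"
begin

lemma ul_rank_less:
  assumes "v \<in> V" "w \<in> V" "ul_le A v w" "v \<noteq> w"
  shows "ul_rank A V v < ul_rank A V w"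
proof -
  have alg: "ul_algebra A" using chain by (rule ul_chain_algebra)
  have "{x \<in> V. ul_le A x v \<and> x \<noteq> v} \<subset> {x \<in> V. ul_le A x w \<and> x \<noteq> w}"
    using assms V_sub ul_le_trans[OF alg, of _ v w] ul_le_antisym[OF alg, of v w] by blast
  then show ?thesis unfolding ul_rank_def using finite_V by (intro psubset_card_mono) auto
qed

lemma ul_rank_le_iff:
  assumes "v \<in> V" "w \<in> V"
  shows "ul_rank A V v \<le> ul_rank A V w \<longleftrightarrow> ul_le A v w"
  using assms V_sub ul_rank_less[of v w] ul_rank_less[of w v] ul_le_total[OF chain, of v w]
    ul_le_refl[OF ul_chain_algebra[OF chain], of v]
  by (cases "v = w") (auto simp: subset_iff)

lemma inj_on_ul_rank: "inj_on (ul_rank A V) V"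
proof (rule inj_onI)
  fix v w assume "v \<in> V" "w \<in> V" "ul_rank A V v = ul_rank A V w"
  then show "v = w"
    using ul_rank_le_iff ul_le_antisym[OF ul_chain_algebra[OF chain]] V_sub by (metis order_refl subsetD)
qed

lemma ul_rank_bot: "ul_rank A V (ubot A) = 0"
proof -
  have "ubot A \<in> ucar A" using ul_chain_algebra[OF chain] unfolding ul_algebra_def by blast
  then have empty: "{w \<in> V. ul_le A w (ubot A) \<and> w \<noteq> ubot A} = {}"
    using V_sub ul_bot_le[OF ul_chain_algebra[OF chain]]
      ul_le_antisym[OF ul_chain_algebra[OF chain]] by blast
  show ?thesis unfolding ul_rank_def empty by simp
qed

lemma ul_rank_meet:
  assumes "x \<in> V" "y \<in> V"
  shows "ul_rank A V (umeet A x y) = min (ul_rank A V x) (ul_rank A V y)"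
  using assms subsetD[OF V_sub assms(1)] subsetD[OF V_sub assms(2)]
  by (auto simp: ul_chain_meet[OF chain] ul_rank_le_iff min_def)

lemma ul_rank_join:
  assumes "x \<in> V" "y \<in> V"
  shows "ul_rank A V (ujoin A x y) = max (ul_rank A V x) (ul_rank A V y)"
  using assms subsetD[OF V_sub assms(1)] subsetD[OF V_sub assms(2)]
  by (auto simp: ul_chain_join[OF chain] ul_rank_le_iff max_def)

end

lemma K2_iff_fuzzy_total_preorder:
  assumes chain: "ul_chain A" and V: "finite V" "V \<subseteq> ucar A" and one: "uone A \<in> V"
    and range_V: "\<forall>x\<in>fst S. \<forall>y\<in>fst S. snd S x y \<in> V"
  shows "S \<in> K2 A \<longleftrightarrow>
    finite (fst S) \<and> fuzzy_total_preorder (ul_rank A V (uone A)) (fst S) (\<lambda>x y. ul_rank A V (snd S x y))"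
proof -
  note alg = ul_chain_algebra[OF chain] and rank_le = ul_rank_le_iff[OF chain V]
  have in_car: "x \<in> ucar A" if "x \<in> V" for x using that V by blast
  have refl: "ul_le A (uone A) x \<longleftrightarrow> ul_rank A V (uone A) \<le> ul_rank A V x" if "x \<in> V" for x
    using rank_le[OF one that] by simp
  have trans: "ul_le A (uone A) (uimp A (umeet A x y) z) \<longleftrightarrow>
      min (ul_rank A V x) (ul_rank A V y) \<le> ul_rank A V z" if "x \<in> V" "y \<in> V" "z \<in> V" for x y z
  proof -
    have meet: "umeet A x y \<in> V" using that ul_chain_meet[OF chain] in_car by simp
    then have "ul_le A (uone A) (uimp A (umeet A x y) z) \<longleftrightarrow> ul_le A (umeet A x y) z"
      using ul_one_le_imp_iff[OF alg] in_car that by blast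
    also have "\<dots> \<longleftrightarrow> ul_rank A V (umeet A x y) \<le> ul_rank A V z"
      using rank_le[OF meet \<open>z \<in> V\<close>] by simp
    finally show ?thesis using ul_rank_meet[OF chain V] that by simp
  qed
  have total: "ul_le A (uone A) (ujoin A x y) \<longleftrightarrow>
      ul_rank A V (uone A) \<le> ul_rank A V x \<or> ul_rank A V (uone A) \<le> ul_rank A V y"
    if "x \<in> V" "y \<in> V" for x y
  proof -
    have "ujoin A x y \<in> V" using that ul_chain_join[OF chain] in_car by simp
    then have "ul_le A (uone A) (ujoin A x y) \<longleftrightarrow>
        ul_rank A V (uone A) \<le> ul_rank A V (ujoin A x y)"
      using rank_le one by simp
    then show ?thesis using ul_rank_join[OF chain V] that by auto
  qed
  have "is_astr A S" using range_V V unfolding is_astr_def by blast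
  then show ?thesis
    using range_V unfolding K2_def fuzzy_total_preorder_def by (simp add: refl trans total) blast
qed

section \<open>The class K2\<close>

lemma embedding_comp:
  assumes f: "embedding f M N" and g: "embedding g N P"
  shows "embedding (g \<circ> f) M P"
proof -
  have "f ` fst M \<subseteq> fst N" "inj_on f (fst M)" "inj_on g (fst N)"
    using f g unfolding embedding_def by auto
  then have "inj_on (g \<circ> f) (fst M)" by (blast intro: comp_inj_on inj_on_subset)
  then show ?thesis using f g unfolding embedding_def by (auto simp: image_subset_iff)
qed

lemma isomorphism_comp: "isomorphism f M N \<Longrightarrow> isomorphism g N P \<Longrightarrow> isomorphism (g \<circ> f) M P"
  unfolding isomorphism_def by (metis embedding_comp image_comp)

lemma isomorphism_inv_into:
  assumes "isomorphism f M N"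
  shows "isomorphism (inv_into (fst M) f) N M"
proof -
  let ?g = "inv_into (fst M) f"
  have bij: "bij_betw f (fst M) (fst N)"
    using assms unfolding isomorphism_def embedding_def bij_betw_def by blast
  have pres: "snd N (f x) (f y) = snd M x y" if "x \<in> fst M" "y \<in> fst M" for x y
    using assms that unfolding isomorphism_def embedding_def by blast
  have "snd M (?g x) (?g y) = snd N x y" if "x \<in> fst N" "y \<in> fst N" for x y
    using pres[of "?g x" "?g y"] that bij_betw_inv_into_right[OF bij]
      bij_betw_apply[OF bij_betw_inv_into[OF bij]]
    by simp
  then show ?thesis
    using bij_betw_inv_into[OF bij] unfolding isomorphism_def embedding_def bij_betw_def by blast
qed

lemma isomorphic_sym: "isomorphic M N \<Longrightarrow> isomorphic N M"
  unfolding isomorphic_def using isomorphism_inv_into by blast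

lemma isomorphic_trans: "isomorphic M N \<Longrightarrow> isomorphic N P \<Longrightarrow> isomorphic M P"
  unfolding isomorphic_def using isomorphism_comp by blast

definition astr_image :: "('b \<Rightarrow> 'c) \<Rightarrow> ('b, 'a) astr \<Rightarrow> ('c, 'a) astr" where
  "astr_image f M = (f ` fst M, \<lambda>x y. if x \<in> f ` fst M \<and> y \<in> f ` fst M
     then snd M (inv_into (fst M) f x) (inv_into (fst M) f y) else undefined)"

lemma isomorphism_astr_image: "inj_on f (fst M) \<Longrightarrow> isomorphism f M (astr_image f M)"
  unfolding isomorphism_def embedding_def astr_image_def by auto

lemma K2_isomorphism:
  assumes "M \<in> K2 A" "isomorphism f M N"
  shows "N \<in> K2 A"
proof -
  have univ: "fst N = f ` fst M"
    and eq: "\<And>x y. x \<in> fst M \<Longrightarrow> y \<in> fst M \<Longrightarrow> snd N (f x) (f y) = snd M x y"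
    using assms(2) unfolding isomorphism_def embedding_def by auto
  show ?thesis
    using assms(1) unfolding K2_def is_astr_def mem_Collect_eq univ Ball_image_comp comp_def
    by (simp add: eq)
qed

lemma K2_isomorphic: "M \<in> K2 A \<Longrightarrow> isomorphic M N \<Longrightarrow> N \<in> K2 A"
  unfolding isomorphic_def using K2_isomorphism by blast

lemma K2_substr:
  assumes "M \<in> K2 A" "substr N M"
  shows "N \<in> K2 A"
proof -
  have sub: "fst N \<subseteq> fst M"
    and eq: "\<And>x y. x \<in> fst N \<Longrightarrow> y \<in> fst N \<Longrightarrow> snd N x y = snd M x y"
    using assms(2) unfolding substr_def by auto
  show ?thesis
    using assms(1) sub unfolding K2_def is_astr_def mem_Collect_eq
    by (simp add: eq) (meson finite_subset subsetD)
qed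

lemma K2_inv_into_ul_rank:
  assumes chain: "ul_chain A" and V: "finite V" "V \<subseteq> ucar A" "uone A \<in> V" and "finite X"
    and ftp: "fuzzy_total_preorder (ul_rank A V (uone A)) X r"
    and range_r: "\<And>x y. x \<in> X \<Longrightarrow> y \<in> X \<Longrightarrow> r x y \<in> ul_rank A V ` V"
  shows "(X, \<lambda>x y. inv_into V (ul_rank A V) (r x y)) \<in> K2 A"
proof -
  have inv: "inv_into V (ul_rank A V) (r x y) \<in> V"
      "ul_rank A V (inv_into V (ul_rank A V) (r x y)) = r x y" if "x \<in> X" "y \<in> X" for x y
    using range_r[OF that] by (auto intro: inv_into_into f_inv_into_f)
  then have "fuzzy_total_preorder (ul_rank A V (uone A)) X
      (\<lambda>x y. ul_rank A V (inv_into V (ul_rank A V) (r x y)))"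
    using ftp fuzzy_total_preorder_cong by (metis (no_types, lifting))
  then show ?thesis
    using K2_iff_fuzzy_total_preorder[OF chain V,
        of "(X, \<lambda>x y. inv_into V (ul_rank A V) (r x y))"] inv(1) \<open>finite X\<close> by simp
qed

lemma fuzzy_total_preorder_ul_rank:
  assumes chain: "ul_chain A" and V: "finite V" "V \<subseteq> ucar A" "uone A \<in> V"
    and "(X, R) \<in> K2 A" and "\<And>x y. x \<in> X \<Longrightarrow> y \<in> X \<Longrightarrow> R x y \<in> V"
  shows "fuzzy_total_preorder (ul_rank A V (uone A)) X (\<lambda>x y. ul_rank A V (R x y))"
  using K2_iff_fuzzy_total_preorder[OF chain V, of "(X, R)"] assms(5,6) by simp

lemma K2_glue:
  assumes chain: "ul_chain A" and in_K2: "(X1, R) \<in> K2 A" "(X2, R) \<in> K2 A"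
  obtains R' where "(X1 \<union> X2, R') \<in> K2 A"
    and "\<forall>x\<in>X1. \<forall>y\<in>X1. R' x y = R x y" and "\<forall>x\<in>X2. \<forall>y\<in>X2. R' x y = R x y"
proof -
  have fin: "finite X1" "finite X2" using in_K2 unfolding K2_def by auto
  define V where "V = insert (uone A) (insert (ubot A) (case_prod R ` (X1 \<times> X1 \<union> X2 \<times> X2)))"
  have "uone A \<in> ucar A" "ubot A \<in> ucar A"
    using ul_chain_algebra[OF chain] unfolding ul_algebra_def by blast+
  moreover have "case_prod R ` (X1 \<times> X1 \<union> X2 \<times> X2) \<subseteq> ucar A"
    using in_K2 unfolding K2_def is_astr_def by auto
  ultimately have V: "finite V" "V \<subseteq> ucar A" "uone A \<in> V" "ubot A \<in> V"
    using fin unfolding V_def by auto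
  have R_V: "R x y \<in> V" if "(x \<in> X1 \<and> y \<in> X1) \<or> (x \<in> X2 \<and> y \<in> X2)" for x y
    using that unfolding V_def by blast
  define \<rho> where "\<rho> = ul_rank A V"
  interpret fuzzy_amalgamation "\<rho> (uone A)" X1 X2 "\<lambda>x y. \<rho> (R x y)"
    using fin fuzzy_total_preorder_ul_rank[OF chain V(1-3)] in_K2 R_V
    unfolding \<rho>_def by unfold_locales auto
  define T where "T = fuzzy_amalgam (\<rho> (uone A)) X1 X2 (\<lambda>x y. \<rho> (R x y))"
  have "(X1 \<union> X2, \<lambda>x y. inv_into V \<rho> (T x y)) \<in> K2 A"
    unfolding \<rho>_def
  proof (rule K2_inv_into_ul_rank[OF chain V(1-3)])
    show "fuzzy_total_preorder (ul_rank A V (uone A)) (X1 \<union> X2) T"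
      using fuzzy_total_preorder_amalgam unfolding T_def \<rho>_def .
    show "T x y \<in> ul_rank A V ` V" if "x \<in> X1 \<union> X2" "y \<in> X1 \<union> X2" for x y
      using amalgam_range[OF that] V(3,4) R_V ul_rank_bot[OF chain V(1,2)]
      unfolding T_def \<rho>_def bot_nat_def by auto
  qed (use fin in simp)
  moreover have "inv_into V \<rho> (T x y) = R x y"
    if "(x \<in> X1 \<and> y \<in> X1) \<or> (x \<in> X2 \<and> y \<in> X2)" for x y
    using fuzzy_amalgam_eq[OF that, where r = "\<lambda>x y. \<rho> (R x y)"]
      inv_into_f_f[OF inj_on_ul_rank[OF chain V(1,2)] R_V[OF that]]
    unfolding T_def \<rho>_def by simp
  ultimately show thesis using that by blast
qed

lemma K2_amalgamation:
  fixes M0 M1 M2 :: "('b, 'a) astr"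
  assumes chain: "ul_chain A" and in_K2: "M1 \<in> K2 A" "M2 \<in> K2 A"
    and sub: "substr M0 M1" "substr M0 M2"
  obtains W :: "('b + 'b, 'a) astr" and f1 f2
  where "W \<in> K2 A" "embedding f1 M1 W" "embedding f2 M2 W" "\<forall>x\<in>fst M0. f1 x = f2 x"
proof -
  define g :: "'b \<Rightarrow> 'b + 'b" where "g y = (if y \<in> fst M0 then Inl y else Inr y)" for y
  define R where "R u v = (let x = case_sum id id u; y = case_sum id id v in
    if u \<in> Inl ` fst M1 \<and> v \<in> Inl ` fst M1 then snd M1 x y else snd M2 x y)" for u v
  have R1: "R (Inl x) (Inl y) = snd M1 x y" if "x \<in> fst M1" "y \<in> fst M1" for x y
    using that unfolding R_def by simp
  have R2: "R (g x) (g y) = snd M2 x y" if "x \<in> fst M2" "y \<in> fst M2" for x y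
    using that sub unfolding R_def g_def substr_def by auto
  have "inj g" unfolding g_def inj_def by auto
  then have "isomorphism Inl M1 (Inl ` fst M1, R)" "isomorphism g M2 (g ` fst M2, R)"
    using R1 R2 unfolding isomorphism_def embedding_def by (auto intro: inj_on_subset)
  then obtain R' where R': "(Inl ` fst M1 \<union> g ` fst M2, R') \<in> K2 A"
      "\<forall>x\<in>Inl ` fst M1. \<forall>y\<in>Inl ` fst M1. R' x y = R x y"
      "\<forall>x\<in>g ` fst M2. \<forall>y\<in>g ` fst M2. R' x y = R x y"
    using K2_glue[OF chain K2_isomorphism[OF in_K2(1)] K2_isomorphism[OF in_K2(2)]] by blast
  show thesis
  proof (rule that[OF R'(1)])
    show "embedding Inl M1 (Inl ` fst M1 \<union> g ` fst M2, R')"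
      using R'(2) R1 unfolding embedding_def by auto
    show "embedding g M2 (Inl ` fst M1 \<union> g ` fst M2, R')"
      using R'(3) R2 \<open>inj g\<close> unfolding embedding_def by (auto intro: inj_on_subset)
    show "\<forall>x\<in>fst M0. Inl x = g x" unfolding g_def by simp
  qed
qed

(* Relations are fixed to undefined off the universe, so that a canonical structure is
   determined by finitely many truth values; hence there are only countably many of them. *)
definition canonical_astrs :: "(nat \<Rightarrow> 'b) \<Rightarrow> ('b, 'a) astr set" where
  "canonical_astrs e = {N. (\<exists>n. fst N = e ` {..<n}) \<and>
     (\<forall>x y. \<not> (x \<in> fst N \<and> y \<in> fst N) \<longrightarrow> snd N x y = undefined)}"

lemma ex_isomorphic_canonical:
  assumes "finite (fst M)" "inj e"
  shows "\<exists>N\<in>canonical_astrs e. isomorphic M N"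
proof -
  obtain h where h: "bij_betw h (fst M) {..<card (fst M)}"
    using ex_bij_betw_finite_nat[OF assms(1)] atLeast0LessThan by metis
  then have inj: "inj_on (e \<circ> h) (fst M)"
    using assms(2) by (metis bij_betw_def comp_inj_on inj_on_subset subset_UNIV)
  have "(e \<circ> h) ` fst M = e ` h ` fst M" by (rule image_comp[symmetric])
  also have "\<dots> = e ` {..<card (fst M)}" using bij_betw_imp_surj_on[OF h] by simp
  finally have "astr_image (e \<circ> h) M \<in> canonical_astrs e"
    unfolding canonical_astrs_def astr_image_def by auto
  moreover have "isomorphism (e \<circ> h) M (astr_image (e \<circ> h) M)"
    using inj by (rule isomorphism_astr_image)
  ultimately show ?thesis unfolding isomorphic_def by blast
qed

lemma countable_K2_canonical:
  fixes A :: "('a, 'm) ul_alg_scheme" and e :: "nat \<Rightarrow> 'b"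
  assumes "countable (ucar A)" "inj e"
  shows "countable (K2 A \<inter> canonical_astrs e)"
proof -
  define decode :: "nat \<times> 'a list list \<Rightarrow> ('b, 'a) astr"
    where "decode = (\<lambda>(n, L). (e ` {..<n}, \<lambda>x y.
      if x \<in> e ` {..<n} \<and> y \<in> e ` {..<n} then L ! inv e x ! inv e y else undefined))"
  have "K2 A \<inter> canonical_astrs e \<subseteq> decode ` (UNIV \<times> lists (lists (ucar A)))"
  proof
    fix N assume N: "N \<in> K2 A \<inter> canonical_astrs e"
    then obtain n where n: "fst N = e ` {..<n}" unfolding canonical_astrs_def by auto
    define L where "L = map (\<lambda>i. map (\<lambda>j. snd N (e i) (e j)) [0..<n]) [0..<n]"
    have "L \<in> lists (lists (ucar A))"
      using N n unfolding L_def K2_def is_astr_def by auto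
    moreover have "snd N = snd (decode (n, L))"
      using N n assms(2) unfolding decode_def L_def canonical_astrs_def by (fastforce simp: fun_eq_iff)
    then have "N = decode (n, L)" using n unfolding decode_def by (simp add: prod_eq_iff)
    ultimately show "N \<in> decode ` (UNIV \<times> lists (lists (ucar A)))" by blast
  qed
  moreover have "countable (decode ` (UNIV \<times> lists (lists (ucar A))))"
    using assms(1) by simp
  ultimately show ?thesis by (rule countable_subset)
qed

lemma ex_iso_reps:
  fixes K C :: "('b, 'a) astr set"
  assumes "C \<subseteq> K" "\<forall>M\<in>K. \<exists>N\<in>C. isomorphic M N"
  shows "\<exists>S\<subseteq>C. iso_reps K S"
proof -
  define rep :: "('b, 'a) astr \<Rightarrow> ('b, 'a) astr"
    where "rep M = (SOME N. N \<in> C \<and> isomorphic M N)" for M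
  have rep: "rep M \<in> C" "isomorphic M (rep M)" if "M \<in> K" for M
    using someI_ex[OF assms(2)[rule_format, OF that, unfolded Bex_def]] unfolding rep_def by blast+
  have "rep M1 = rep M2" if "M1 \<in> K" "M2 \<in> K" "isomorphic (rep M1) (rep M2)" for M1 M2
  proof -
    have iff: "isomorphic M1 N \<longleftrightarrow> isomorphic M2 N" for N
      using rep that isomorphic_trans isomorphic_sym by meson
    show ?thesis unfolding rep_def iff ..
  qed
  then have "iso_reps K (rep ` K)"
    using rep assms(1) unfolding iso_reps_def by blast
  moreover have "rep ` K \<subseteq> C" using rep by blast
  ultimately show ?thesis by blast
qed

lemma iso_closure_eq:
  assumes "iso_reps K S" and "\<And>M N. N \<in> K \<Longrightarrow> isomorphic M N \<Longrightarrow> M \<in> K"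
  shows "iso_closure S = K"
  using assms unfolding iso_reps_def iso_closure_def by blast

lemma K2_isomorphic_canonical:
  assumes "M \<in> K2 A" "inj e"
  shows "\<exists>N\<in>K2 A \<inter> canonical_astrs e. isomorphic M N"
proof -
  obtain N where "N \<in> canonical_astrs e" "isomorphic M N"
    using ex_isomorphic_canonical[OF _ assms(2)] assms(1) unfolding K2_def by blast
  then show ?thesis using K2_isomorphic assms(1) by blast
qed

lemma K2_amalgamation_in_reps:
  fixes S :: "('b, 'a) astr set" and e :: "nat \<Rightarrow> 'b" and M0 M1 M2 :: "('c, 'a) astr"
  assumes chain: "ul_chain A" and reps: "iso_reps (K2 A) S" and e: "inj e"
    and K2: "M1 \<in> K2 A" "M2 \<in> K2 A" and sub: "substr M0 M1" "substr M0 M2"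
  shows "\<exists>M3\<in>S. \<exists>f1 f2. embedding f1 M1 M3 \<and> embedding f2 M2 M3 \<and> (\<forall>x\<in>fst M0. f1 x = f2 x)"
proof -
  obtain W :: "('c + 'c, 'a) astr" and f1 f2 where W: "W \<in> K2 A"
    "embedding f1 M1 W" "embedding f2 M2 W" "\<forall>x\<in>fst M0. f1 x = f2 x"
    by (rule K2_amalgamation[OF chain K2 sub])
  obtain N :: "('b, 'a) astr" where N: "N \<in> K2 A" "isomorphic W N"
    using K2_isomorphic_canonical[OF W(1) e] by blast
  obtain M3 where M3: "M3 \<in> S" "isomorphic N M3"
    using reps N(1) unfolding iso_reps_def by blast
  obtain k where "isomorphism k W M3"
    using isomorphic_trans[OF N(2) M3(2)] unfolding isomorphic_def by blast
  then have "embedding (k \<circ> f1) M1 M3" "embedding (k \<circ> f2) M2 M3"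
    using embedding_comp[OF W(2)] embedding_comp[OF W(3)] unfolding isomorphism_def by blast+
  moreover have "\<forall>x\<in>fst M0. (k \<circ> f1) x = (k \<circ> f2) x" using W(4) by simp
  ultimately show ?thesis using M3(1) by blast
qed

theorem proposition3:
  fixes A :: "'a ul_alg"
  assumes "ul_chain A"
    and "countable (ucar A)"
    and "infinite (UNIV :: 'b set)"
  shows "\<exists>S :: ('b, 'a) astr set. iso_reps (K2 A) S \<and> fraisse_class S"
proof -
  obtain e :: "nat \<Rightarrow> 'b" where e: "inj e"
    using infinite_countable_subset[OF assms(3)] by blast
  obtain S where S: "S \<subseteq> K2 A \<inter> canonical_astrs e" "iso_reps (K2 A) S"
    using ex_iso_reps[of "K2 A \<inter> canonical_astrs e" "K2 A"] K2_isomorphic_canonical[OF _ e]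
    by blast
  have closure: "iso_closure S = K2 A"
    using iso_closure_eq[OF S(2)] K2_isomorphic isomorphic_sym by blast
  note amalgamate = K2_amalgamation_in_reps[OF assms(1) S(2) e]
  have empty_substr: "substr ({}, \<lambda>_ _. undefined) M" for M :: "('b, 'a) astr"
    by (simp add: substr_def)
  have "countable S"
    using countable_subset[OF S(1) countable_K2_canonical[OF assms(2) e]] .
  moreover have "\<forall>M\<in>S. finite (fst M)" using S(1) unfolding K2_def by blast
  moreover have "hereditary S" unfolding hereditary_def closure using K2_substr by blast
  moreover have "jep S" unfolding jep_def closure using amalgamate empty_substr by blast
  moreover have "amalgamation S" unfolding amalgamation_def closure using amalgamate by blast
  ultimately show ?thesis using S(2) unfolding fraisse_class_def by blast
qed

end
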